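(* Consider problem (P) and suppose Assumptions A and B hold. Let $\{x^t\}$ be generated by SCP$_{ls}$ and let $\Omega_x$ be the set of accumulation points of $\{x^t\}$. Then (i) $\Omega_x\neq\emptyset$ and $F\equiv\bar F^*$ on $\Omega_x$; (ii) $\{F(x^t)\}$ is nonincreasing and converges to $\bar F^*$, where $\bar F^*:=\lim_{t\to\infty}\bar F(x^{t+1},x^t,L_g^t)$ (this limit exists and is finite).
   Context: Problem (P): $\min_{x\in\mathbb R^n}F(x):=f(x)+P_1(x)-P_2(x)+\delta_{\{g\le 0\}}(x)$, where $f:\mathbb R^n\to\mathbb R$ is continuously differentiable, $P_1,P_2:\mathbb R^n\to\mathbb R$ are convex and continuous, $g=(g_1,\dots,g_m):\mathbb R^n\to\mathbb R^m$ is continuous with $\{x:g(x)\le0\}\neq\emptyset$ (componentwise inequalities), $\delta_C$ the indicator function of $C$. Assumption A: (i) $\nabla f$ is Lipschitz with modulus $L_f$; (ii) each $g_i$ is differentiable with $\nabla g_i$ Lipschitz with modulus $L_{g_i}$; (iii) $F$ is level-bounded. Assumption B (MFCQ): each $g_i$ is continuously differentiable and for every $x$ with $g(x)\le0$ there is $d$ with $\langle\nabla g_i(x),d\rangle<0$ for all $i\in I(x):=\{j:g_j(x)=0\}$. $\bar G(x,y,w)\in\mathbb R^m$ has components $\bar G_i(x,y,w)=g_i(y)+\langle\nabla g_i(y),x-y\rangle+\frac{w_i}{2}\|x-y\|^2$, and $\bar F(x,y,w):=f(x)+P_1(x)-P_2(x)+\delta_{\{\bar G\le0\}}(x,y,w)$.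 Algorithm SCP$_{ls}$: fix $c>0$, $0<\underline L<\bar L$, $\tau>1$ and $x^0$ with $g(x^0)\le0$. For $t=0,1,2,\dots$: (1) pick any $\xi^t\in\partial P_2(x^t)$; (2) choose $L_f^{t,0}\in[\underline L,\bar L]$, $L_g^{t,0}\in[\underline L,\bar L]^m$ arbitrarily, set $\tilde L_f=L_f^{t,0}$, $\tilde L_g=L_g^{t,0}$; (3) compute $\tilde x$ solving: minimize $\langle\nabla f(x^t)-\xi^t,x-x^t\rangle+\frac{\tilde L_f}{2}\|x-x^t\|^2+P_1(x)$ subject to $\bar G(x,x^t,\tilde L_g)\le0$. If $g(\tilde x)\le0$ and $F(\tilde x)\le F(x^t)-\frac c2\|\tilde x-x^t\|^2$, set $x^{t+1}=\tilde x$, $L_f^t=\tilde L_f$, $L_g^t=\tilde L_g$ and go to iteration $t+1$; otherwise, if $g(\tilde x)\not\le0$ replace $\tilde L_g$ by $\tau\tilde L_g$, while if $g(\tilde x)\le0$ but the decrease inequality fails replace $\tilde L_f$ by $\tau\tilde L_f$, and repeat step (3). *)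

theory Defs
  imports "HOL-Analysis.Analysis"
begin

text \<open>Points live in an abstract Euclidean space 'a (playing the role of R^n);
constraints are indexed by a finite type 'm (playing the role of {1..m}).
Gradients are passed explicitly as functions and tied to the functions by
has_derivative assumptions in the theorem.\<close>

definition subgrad :: "('a::real_inner \<Rightarrow> real) \<Rightarrow> 'a \<Rightarrow> 'a \<Rightarrow> bool" where
  "subgrad P x \<xi> \<longleftrightarrow> (\<forall>y. P y \<ge> P x + \<xi> \<bullet> (y - x))"

definition feasible :: "('m \<Rightarrow> 'a \<Rightarrow> real) \<Rightarrow> 'a \<Rightarrow> bool" where
  "feasible g x \<longleftrightarrow> (\<forall>i. g i x \<le> 0)"

definition Fobj :: "('a \<Rightarrow> real) \<Rightarrow> ('a \<Rightarrow> real) \<Rightarrow> ('a \<Rightarrow> real) \<Rightarrow> ('m \<Rightarrow> 'a \<Rightarrow> real) \<Rightarrow> 'a \<Rightarrow> ereal" where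
  "Fobj f P1 P2 g x = (if feasible g x then ereal (f x + P1 x - P2 x) else \<infinity>)"

definition Gbar :: "('m \<Rightarrow> 'a::real_inner \<Rightarrow> real) \<Rightarrow> ('m \<Rightarrow> 'a \<Rightarrow> 'a) \<Rightarrow> 'a \<Rightarrow> 'a \<Rightarrow> ('m \<Rightarrow> real) \<Rightarrow> 'm \<Rightarrow> real" where
  "Gbar g gradg x y w i = g i y + gradg i y \<bullet> (x - y) + w i / 2 * (norm (x - y))\<^sup>2"

definition Fbar :: "('a \<Rightarrow> real) \<Rightarrow> ('a \<Rightarrow> real) \<Rightarrow> ('a \<Rightarrow> real) \<Rightarrow> ('m \<Rightarrow> 'a::real_inner \<Rightarrow> real)
    \<Rightarrow> ('m \<Rightarrow> 'a \<Rightarrow> 'a) \<Rightarrow> 'a \<Rightarrow> 'a \<Rightarrow> ('m \<Rightarrow> real) \<Rightarrow> ereal" where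
  "Fbar f P1 P2 g gradg x y w =
     (if (\<forall>i. Gbar g gradg x y w i \<le> 0) then ereal (f x + P1 x - P2 x) else \<infinity>)"

definition subobj :: "('a::real_inner \<Rightarrow> 'a) \<Rightarrow> ('a \<Rightarrow> real) \<Rightarrow> 'a \<Rightarrow> 'a \<Rightarrow> real \<Rightarrow> 'a \<Rightarrow> real" where
  "subobj gradf P1 xt \<xi> Lf x = (gradf xt - \<xi>) \<bullet> (x - xt) + Lf / 2 * (norm (x - xt))\<^sup>2 + P1 x"

definition subsol :: "('a::real_inner \<Rightarrow> 'a) \<Rightarrow> ('a \<Rightarrow> real) \<Rightarrow> ('m \<Rightarrow> 'a \<Rightarrow> real) \<Rightarrow> ('m \<Rightarrow> 'a \<Rightarrow> 'a)
    \<Rightarrow> 'a \<Rightarrow> 'a \<Rightarrow> real \<Rightarrow> ('m \<Rightarrow> real) \<Rightarrow> 'a \<Rightarrow> bool" where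
  "subsol gradf P1 g gradg xt \<xi> Lf Lg z \<longleftrightarrow>
     (\<forall>i. Gbar g gradg z xt Lg i \<le> 0) \<and>
     (\<forall>x. (\<forall>i. Gbar g gradg x xt Lg i \<le> 0) \<longrightarrow> subobj gradf P1 xt \<xi> Lf z \<le> subobj gradf P1 xt \<xi> Lf x)"

definition accepted :: "('a \<Rightarrow> real) \<Rightarrow> ('a \<Rightarrow> real) \<Rightarrow> ('a \<Rightarrow> real) \<Rightarrow> ('m \<Rightarrow> 'a::real_normed_vector \<Rightarrow> real)
    \<Rightarrow> real \<Rightarrow> 'a \<Rightarrow> 'a \<Rightarrow> bool" where
  "accepted f P1 P2 g c xt z \<longleftrightarrow>
     feasible g z \<and> Fobj f P1 P2 g z \<le> Fobj f P1 P2 g xt - ereal (c / 2 * (norm (z - xt))\<^sup>2)"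

text \<open>One outer iteration (steps (2)-(3), including the inner line search) of SCP_ls:
from x^t and \<xi>^t it produces x^{t+1} with accepted parameters L_f^t, L_g^t.
lf k, lg k, z k are the k-th trial parameters and trial point; N is the accepted trial.\<close>
definition scp_step ::
  "('a \<Rightarrow> real) \<Rightarrow> ('a::real_inner \<Rightarrow> 'a) \<Rightarrow> ('a \<Rightarrow> real) \<Rightarrow> ('a \<Rightarrow> real) \<Rightarrow> ('m \<Rightarrow> 'a \<Rightarrow> real)
   \<Rightarrow> ('m \<Rightarrow> 'a \<Rightarrow> 'a) \<Rightarrow> real \<Rightarrow> real \<Rightarrow> real \<Rightarrow> real
   \<Rightarrow> 'a \<Rightarrow> 'a \<Rightarrow> 'a \<Rightarrow> real \<Rightarrow> ('m \<Rightarrow> real) \<Rightarrow> bool" where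
  "scp_step f gradf P1 P2 g gradg c Lmin Lmax \<tau> xt \<xi> xnext Lf Lg \<longleftrightarrow>
     (\<exists>N::nat. \<exists>lf lg z.
        lf 0 \<in> {Lmin..Lmax} \<and> (\<forall>i. lg 0 i \<in> {Lmin..Lmax}) \<and>
        (\<forall>k\<le>N. subsol gradf P1 g gradg xt \<xi> (lf k) (lg k) (z k)) \<and>
        (\<forall>k<N. \<not> accepted f P1 P2 g c xt (z k) \<and>
           (if feasible g (z k)
            then lf (Suc k) = \<tau> * lf k \<and> lg (Suc k) = lg k
            else lf (Suc k) = lf k \<and> lg (Suc k) = (\<lambda>i. \<tau> * lg k i))) \<and>
        accepted f P1 P2 g c xt (z N) \<and>
        xnext = z N \<and> Lf = lf N \<and> Lg = lg N)"

definition SCPls ::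
  "('a \<Rightarrow> real) \<Rightarrow> ('a::real_inner \<Rightarrow> 'a) \<Rightarrow> ('a \<Rightarrow> real) \<Rightarrow> ('a \<Rightarrow> real) \<Rightarrow> ('m \<Rightarrow> 'a \<Rightarrow> real)
   \<Rightarrow> ('m \<Rightarrow> 'a \<Rightarrow> 'a) \<Rightarrow> real \<Rightarrow> real \<Rightarrow> real \<Rightarrow> real
   \<Rightarrow> (nat \<Rightarrow> 'a) \<Rightarrow> (nat \<Rightarrow> 'a) \<Rightarrow> (nat \<Rightarrow> real) \<Rightarrow> (nat \<Rightarrow> 'm \<Rightarrow> real) \<Rightarrow> bool" where
  "SCPls f gradf P1 P2 g gradg c Lmin Lmax \<tau> x \<xi> LF LG \<longleftrightarrow>
     feasible g (x 0) \<and>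
     (\<forall>t. subgrad P2 (x t) (\<xi> t) \<and>
          scp_step f gradf P1 P2 g gradg c Lmin Lmax \<tau> (x t) (\<xi> t) (x (Suc t)) (LF t) (LG t))"

definition accpts :: "(nat \<Rightarrow> 'a::topological_space) \<Rightarrow> 'a set" where
  "accpts x = {z. \<exists>r. strict_mono r \<and> (x \<circ> r) \<longlonglongrightarrow> z}"

end

theory Submission
  imports Defs
begin

text \<open>Every accepted trial point is feasible and decreases F by at least (c/2)|x(t+1) - x(t)|^2,
so F(x(t)) is nonincreasing and the iterates stay in the bounded level set {F \<le> F(x(0))}.
Continuity of f + P1 - P2 on this bounded set bounds F(x(t)) from below, hence F(x(t)) converges,
and by continuity every accumulation point is feasible with the same value.  Since x(t+1)
satisfies the linearised constraints of the accepted subproblem, Fbar(x(t+1), x(t), LG(t))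
coincides with F(x(t+1)) and has the same limit.  The MFCQ and Lipschitz hypotheses are needed
only for the line search to terminate, which the run hypothesis already asserts.\<close>

lemma Fobj_feasible: "feasible g y \<Longrightarrow> Fobj f P1 P2 g y = ereal (f y + P1 y - P2 y)"
  by (simp add: Fobj_def)

lemma Fbar_Gbar_nonpos:
  "(\<forall>i. Gbar g gradg z y w i \<le> 0) \<Longrightarrow> Fbar f P1 P2 g gradg z y w = ereal (f z + P1 z - P2 z)"
  by (simp add: Fbar_def)

lemma accepted_sufficient_decrease:
  assumes "accepted f P1 P2 g c y z" and "feasible g y"
  shows "feasible g z" and "f z + P1 z - P2 z \<le> f y + P1 y - P2 y - c / 2 * (norm (z - y))\<^sup>2"
  using assms by (auto simp: accepted_def Fobj_def)

lemma scp_step_accepted: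
  fixes g :: "'m \<Rightarrow> 'a::real_inner \<Rightarrow> real" and Lg :: "'m \<Rightarrow> real"
  assumes "scp_step f gradf P1 P2 g gradg c Lmin Lmax \<tau> y \<xi> z Lf Lg"
  shows "accepted f P1 P2 g c y z" and "\<forall>i. Gbar g gradg z y Lg i \<le> 0"
proof -
  from assms obtain N :: nat and lf :: "nat \<Rightarrow> real" and lg :: "nat \<Rightarrow> 'm \<Rightarrow> real" and zs :: "nat \<Rightarrow> 'a"
    where "subsol gradf P1 g gradg y \<xi> (lf N) (lg N) (zs N)"
      and "accepted f P1 P2 g c y (zs N)" and "z = zs N" and "Lg = lg N"
    unfolding scp_step_def by blast
  then show "accepted f P1 P2 g c y z" and "\<forall>i. Gbar g gradg z y Lg i \<le> 0"
    by (simp_all add: subsol_def)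
qed

lemma SCPls_feasible:
  assumes "SCPls f gradf P1 P2 g gradg c Lmin Lmax \<tau> x \<xi> LF LG"
  shows "feasible g (x t)"
proof (induction t)
  case 0
  then show ?case using assms by (simp add: SCPls_def)
next
  case (Suc t)
  from assms have "accepted f P1 P2 g c (x t) (x (Suc t))"
    unfolding SCPls_def by (blast dest: scp_step_accepted(1))
  then show ?case using Suc.IH by (rule accepted_sufficient_decrease)
qed

lemma SCPls_sufficient_decrease:
  assumes "SCPls f gradf P1 P2 g gradg c Lmin Lmax \<tau> x \<xi> LF LG"
  shows "f (x (Suc t)) + P1 (x (Suc t)) - P2 (x (Suc t))
           \<le> f (x t) + P1 (x t) - P2 (x t) - c / 2 * (norm (x (Suc t) - x t))\<^sup>2"
proof -
  from assms have "accepted f P1 P2 g c (x t) (x (Suc t))"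
    unfolding SCPls_def by (blast dest: scp_step_accepted(1))
  then show ?thesis using SCPls_feasible[OF assms] by (rule accepted_sufficient_decrease)
qed

lemma SCPls_Gbar_nonpos:
  assumes "SCPls f gradf P1 P2 g gradg c Lmin Lmax \<tau> x \<xi> LF LG"
  shows "Gbar g gradg (x (Suc t)) (x t) (LG t) i \<le> 0"
  using assms unfolding SCPls_def by (blast dest: scp_step_accepted(2))

lemma accpts_nonempty:
  fixes x :: "nat \<Rightarrow> 'a::heine_borel"
  assumes "bounded (range x)"
  shows "accpts x \<noteq> {}"
  using bounded_imp_convergent_subsequence[OF assms] unfolding accpts_def by blast

lemma accpts_continuous_tendsto:
  fixes h :: "'a::topological_space \<Rightarrow> 'b::t2_space"
  assumes "continuous_on UNIV h" and "(\<lambda>t. h (x t)) \<longlonglongrightarrow> l" and "z \<in> accpts x"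
  shows "h z = l"
proof -
  obtain r where r: "strict_mono r" "(x \<circ> r) \<longlonglongrightarrow> z"
    using assms(3) unfolding accpts_def by blast
  have "(\<lambda>n. h ((x \<circ> r) n)) \<longlonglongrightarrow> h z"
    using continuous_on_tendsto_compose[OF assms(1) r(2)] by simp
  moreover have "(\<lambda>n. h ((x \<circ> r) n)) \<longlonglongrightarrow> l"
    using LIMSEQ_subseq_LIMSEQ[OF assms(2) r(1)] by (simp add: comp_def)
  ultimately show ?thesis by (rule LIMSEQ_unique)
qed

lemma accpts_continuous_le:
  fixes h :: "'a::topological_space \<Rightarrow> real"
  assumes "continuous_on UNIV h" and "\<And>t. h (x t) \<le> b" and "z \<in> accpts x"
  shows "h z \<le> b"
proof -
  obtain r where r: "strict_mono r" "(x \<circ> r) \<longlonglongrightarrow> z"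
    using assms(3) unfolding accpts_def by blast
  have "(\<lambda>n. h ((x \<circ> r) n)) \<longlonglongrightarrow> h z"
    using continuous_on_tendsto_compose[OF assms(1) r(2)] by simp
  then show ?thesis
    by (rule LIMSEQ_le_const2) (simp add: assms(2))
qed

lemma decseq_continuous_bounded_convergent:
  fixes x :: "nat \<Rightarrow> 'a::heine_borel" and h :: "'a \<Rightarrow> real"
  assumes "continuous_on UNIV h" and "bounded (range x)" and "decseq (\<lambda>t. h (x t))"
  shows "convergent (\<lambda>t. h (x t))"
proof -
  have "compact (h ` closure (range x))"
    using assms(2) continuous_on_subset[OF assms(1) subset_UNIV]
    by (intro compact_continuous_image) (simp_all add: compact_closure)
  then have "bounded (h ` closure (range x))"
    by (rule compact_imp_bounded)
  moreover have "range (\<lambda>t. h (x t)) \<subseteq> h ` closure (range x)"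
    using closure_subset by blast
  ultimately have "Bseq (\<lambda>t. h (x t))"
    unfolding Bseq_eq_bounded by (rule bounded_subset)
  then show ?thesis
    using decseq_imp_monoseq[OF assms(3)] by (rule Bseq_monoseq_convergent)
qed

theorem mainTheorem8:
  fixes f P1 P2 :: "'a::euclidean_space \<Rightarrow> real"
    and gradf :: "'a \<Rightarrow> 'a"
    and g :: "'m::finite \<Rightarrow> 'a \<Rightarrow> real"
    and gradg :: "'m \<Rightarrow> 'a \<Rightarrow> 'a"
    and c Lmin Lmax \<tau> :: real
    and x \<xi> :: "nat \<Rightarrow> 'a" and LF :: "nat \<Rightarrow> real" and LG :: "nat \<Rightarrow> 'm \<Rightarrow> real"
  assumes f_grad: "\<And>y. (f has_derivative (\<lambda>h. gradf y \<bullet> h)) (at y)"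
    and f_cont_diff: "continuous_on UNIV gradf"
    and P1_convex: "convex_on UNIV P1" and P1_cont: "continuous_on UNIV P1"
    and P2_convex: "convex_on UNIV P2" and P2_cont: "continuous_on UNIV P2"
    and g_cont: "\<And>i. continuous_on UNIV (g i)"
    and feas_nonempty: "\<exists>y. feasible g y"
    \<comment> \<open>Assumption A\<close>
    and A1: "\<exists>Lf. Lf-lipschitz_on UNIV gradf"
    and A2: "\<And>i y. (g i has_derivative (\<lambda>h. gradg i y \<bullet> h)) (at y)"
    and A2': "\<And>i. \<exists>Lgi. Lgi-lipschitz_on UNIV (gradg i)"
    and A3: "\<And>\<alpha>::real. bounded {y. Fobj f P1 P2 g y \<le> ereal \<alpha>}"
    \<comment> \<open>Assumption B (MFCQ)\<close>
    and B1: "\<And>i. continuous_on UNIV (gradg i)"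
    and B2: "\<And>y. feasible g y \<Longrightarrow> \<exists>d. \<forall>i. g i y = 0 \<longrightarrow> gradg i y \<bullet> d < 0"
    \<comment> \<open>algorithm parameters and generated sequence\<close>
    and c_pos: "c > 0" and L_pos: "0 < Lmin" and L_lt: "Lmin < Lmax" and tau: "\<tau> > 1"
    and run: "SCPls f gradf P1 P2 g gradg c Lmin Lmax \<tau> x \<xi> LF LG"
  shows "\<exists>Fstar::real.
           (\<lambda>t. Fbar f P1 P2 g gradg (x (Suc t)) (x t) (LG t)) \<longlonglongrightarrow> ereal Fstar \<and>
           accpts x \<noteq> {} \<and> (\<forall>z\<in>accpts x. Fobj f P1 P2 g z = ereal Fstar) \<and>
           decseq (\<lambda>t. Fobj f P1 P2 g (x t)) \<and>
           (\<lambda>t. Fobj f P1 P2 g (x t)) \<longlonglongrightarrow> ereal Fstar"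
proof -
  define h where "h y = f y + P1 y - P2 y" for y
  have feasible: "feasible g (x t)" for t
    using SCPls_feasible[OF run] .
  have Fobj_x: "Fobj f P1 P2 g (x t) = ereal (h (x t))" for t
    using feasible by (simp add: Fobj_feasible h_def)
  have Fbar_x: "Fbar f P1 P2 g gradg (x (Suc t)) (x t) (LG t) = ereal (h (x (Suc t)))" for t
    using SCPls_Gbar_nonpos[OF run] by (simp add: Fbar_Gbar_nonpos h_def)
  have "h (x (Suc t)) \<le> h (x t)" for t
  proof -
    have "0 \<le> c / 2 * (norm (x (Suc t) - x t))\<^sup>2"
      using c_pos by simp
    then show ?thesis
      using SCPls_sufficient_decrease[OF run, of t] unfolding h_def by linarith
  qed
  then have decreasing: "decseq (\<lambda>t. h (x t))"
    by (rule decseq_SucI)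
  have "range x \<subseteq> {y. Fobj f P1 P2 g y \<le> ereal (h (x 0))}"
    using decreasing by (auto simp: Fobj_x decseq_def)
  then have bounded_x: "bounded (range x)"
    using A3 bounded_subset by blast
  have "continuous_on UNIV f"
    using f_grad has_derivative_continuous continuous_at_imp_continuous_on by blast
  then have h_cont: "continuous_on UNIV h"
    unfolding h_def using P1_cont P2_cont by (intro continuous_intros)
  obtain Fstar where lim: "(\<lambda>t. h (x t)) \<longlonglongrightarrow> Fstar"
    using decseq_continuous_bounded_convergent[OF h_cont bounded_x decreasing]
    unfolding convergent_def by blast
  have "Fobj f P1 P2 g z = ereal Fstar" if "z \<in> accpts x" for z
  proof -
    have "feasible g z"
      using accpts_continuous_le[OF g_cont _ that] feasible unfolding feasible_def by blast
    moreover have "h z = Fstar"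
      using h_cont lim that by (rule accpts_continuous_tendsto)
    ultimately show ?thesis
      by (simp add: Fobj_feasible h_def)
  qed
  moreover have "(\<lambda>t. Fbar f P1 P2 g gradg (x (Suc t)) (x t) (LG t)) \<longlonglongrightarrow> ereal Fstar"
    unfolding Fbar_x using LIMSEQ_Suc[OF lim] by (rule tendsto_ereal)
  moreover have "(\<lambda>t. Fobj f P1 P2 g (x t)) \<longlonglongrightarrow> ereal Fstar"
    unfolding Fobj_x using lim by (rule tendsto_ereal)
  moreover have "decseq (\<lambda>t. Fobj f P1 P2 g (x t))"
    using decreasing by (simp add: Fobj_x decseq_def)
  ultimately show ?thesis
    using accpts_nonempty[OF bounded_x] by blast
qed

end
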